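(* For every $n\ge0$, the simplex $\mathbf{\Delta}^n$ is cofibrant in the Thomason model structure on $\mathbf{Cpx}$.
   Context: A simplicial complex consists of a vertex set and a collection of nonempty finite subsets (simplices) containing all singletons and closed under nonempty subsets; maps are vertex functions preserving simplices; $\mathbf{Cpx}$ is the category. $\mathbf{\Delta}^n$ is the complex on $\{0,\dots,n\}$ in which every nonempty subset is a simplex. $\mathrm{Sing}(K)_n=\mathbf{Cpx}(\mathbf{\Delta}^n,K)$ with simplicial operators by precomposition; $\mathrm{Ex}$ is the right adjoint of barycentric subdivision of simplicial sets. Thomason model structure on $\mathbf{Cpx}$: $f$ is a weak equivalence iff $\mathrm{Sing}(f)$ is a weak homotopy equivalence, a fibration iff $\mathrm{Ex}^2\mathrm{Sing}(f)$ is a Kan fibration, and a cofibration iff it has the left lifting property against all trivial fibrations; cofibrant means the map from the empty complex is a cofibration. *)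

theory Defs
  imports "HOL-Homology.Homology"
begin

type_synonym 'a cpx = "'a set \<times> 'a set set"

definition cverts :: "'a cpx \<Rightarrow> 'a set" where "cverts K = fst K"
definition csimps :: "'a cpx \<Rightarrow> 'a set set" where "csimps K = snd K"

definition simplicial_complex :: "'a cpx \<Rightarrow> bool" where
  "simplicial_complex K \<longleftrightarrow>
     (\<forall>s\<in>csimps K. s \<noteq> {} \<and> finite s \<and> s \<subseteq> cverts K) \<and>
     (\<forall>v\<in>cverts K. {v} \<in> csimps K) \<and>
     (\<forall>s\<in>csimps K. \<forall>t. t \<subseteq> s \<and> t \<noteq> {} \<longrightarrow> t \<in> csimps K)"

text \<open>Maps of simplicial complexes: vertex functions preserving simplices
  (only their values on the vertex set matter).\<close>
definition cpx_map :: "'a cpx \<Rightarrow> 'b cpx \<Rightarrow> ('a \<Rightarrow> 'b) \<Rightarrow> bool" where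
  "cpx_map K L f \<longleftrightarrow>
     (\<forall>v\<in>cverts K. f v \<in> cverts L) \<and> (\<forall>s\<in>csimps K. f ` s \<in> csimps L)"

definition cpx_simplex :: "nat \<Rightarrow> nat cpx" where
  "cpx_simplex n = ({0..n}, {s. s \<noteq> {} \<and> s \<subseteq> {0..n}})"

definition empty_cpx :: "'a cpx" where "empty_cpx = ({}, {})"

definition simp_op :: "nat \<Rightarrow> nat \<Rightarrow> (nat \<Rightarrow> nat) \<Rightarrow> bool" where
  "simp_op m n \<theta> \<longleftrightarrow> (\<forall>i\<le>m. \<theta> i \<le> n) \<and> (\<forall>i j. i \<le> j \<and> j \<le> m \<longrightarrow> \<theta> i \<le> \<theta> j)
                     \<and> (\<forall>i>m. \<theta> i = 0)"

definition op_comp :: "nat \<Rightarrow> (nat \<Rightarrow> nat) \<Rightarrow> (nat \<Rightarrow> nat) \<Rightarrow> (nat \<Rightarrow> nat)" where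
  "op_comp l \<theta> \<phi> = (\<lambda>i. if i \<le> l then \<theta> (\<phi> i) else 0)"

definition op_id :: "nat \<Rightarrow> nat \<Rightarrow> nat" where
  "op_id n = (\<lambda>i. if i \<le> n then i else 0)"

text \<open>A simplicial set: sets of n-simplices and, for \<theta> : [m] \<rightarrow> [n], the
  operator X_n \<rightarrow> X_m written act m n \<theta>.\<close>
record 'x sset =
  sset_set :: "nat \<Rightarrow> 'x set"
  sset_act :: "nat \<Rightarrow> nat \<Rightarrow> (nat \<Rightarrow> nat) \<Rightarrow> 'x \<Rightarrow> 'x"

definition is_sset :: "'x sset \<Rightarrow> bool" where
  "is_sset X \<longleftrightarrow>
    (\<forall>m n \<theta> x. simp_op m n \<theta> \<and> x \<in> sset_set X n \<longrightarrow> sset_act X m n \<theta> x \<in> sset_set X m) \<and>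
    (\<forall>n x. x \<in> sset_set X n \<longrightarrow> sset_act X n n (op_id n) x = x) \<and>
    (\<forall>l m n \<phi> \<theta> x. simp_op l m \<phi> \<and> simp_op m n \<theta> \<and> x \<in> sset_set X n \<longrightarrow>
        sset_act X l m \<phi> (sset_act X m n \<theta> x) = sset_act X l n (op_comp l \<theta> \<phi>) x)"

definition sset_map :: "'x sset \<Rightarrow> 'y sset \<Rightarrow> (nat \<Rightarrow> 'x \<Rightarrow> 'y) \<Rightarrow> bool" where
  "sset_map X Y f \<longleftrightarrow>
    (\<forall>n x. x \<in> sset_set X n \<longrightarrow> f n x \<in> sset_set Y n) \<and>
    (\<forall>m n \<theta> x. simp_op m n \<theta> \<and> x \<in> sset_set X n \<longrightarrow>
        f m (sset_act X m n \<theta> x) = sset_act Y m n \<theta> (f n x))"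

definition std_sset :: "nat \<Rightarrow> (nat \<Rightarrow> nat) sset" where
  "std_sset n = \<lparr> sset_set = (\<lambda>m. {\<theta>. simp_op m n \<theta>}),
                  sset_act = (\<lambda>l m \<phi> \<theta>. op_comp l \<theta> \<phi>) \<rparr>"

definition horn_sset :: "nat \<Rightarrow> nat \<Rightarrow> (nat \<Rightarrow> nat) sset" where
  "horn_sset n k = \<lparr> sset_set = (\<lambda>m. {\<theta>. simp_op m n \<theta> \<and>
                                         (\<exists>j\<le>n. j \<noteq> k \<and> j \<notin> \<theta> ` {0..m})}),
                     sset_act = (\<lambda>l m \<phi> \<theta>. op_comp l \<theta> \<phi>) \<rparr>"

definition kan_fibration :: "'x sset \<Rightarrow> 'y sset \<Rightarrow> (nat \<Rightarrow> 'x \<Rightarrow> 'y) \<Rightarrow> bool" where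
  "kan_fibration X Y p \<longleftrightarrow> sset_map X Y p \<and>
    (\<forall>n k a b. 1 \<le> n \<and> k \<le> n \<and> sset_map (horn_sset n k) X a \<and> sset_map (std_sset n) Y b \<and>
       (\<forall>m \<theta>. \<theta> \<in> sset_set (horn_sset n k) m \<longrightarrow> p m (a m \<theta>) = b m \<theta>) \<longrightarrow>
       (\<exists>h. sset_map (std_sset n) X h \<and>
            (\<forall>m \<theta>. \<theta> \<in> sset_set (horn_sset n k) m \<longrightarrow> h m \<theta> = a m \<theta>) \<and>
            (\<forall>m \<theta>. \<theta> \<in> sset_set (std_sset n) m \<longrightarrow> p m (h m \<theta>) = b m \<theta>)))"

definition Sing :: "'a cpx \<Rightarrow> (nat \<Rightarrow> 'a) sset" where
  "Sing K = \<lparr> sset_set = (\<lambda>n. {\<sigma>. cpx_map (cpx_simplex n) K \<sigma> \<and> (\<forall>i>n. \<sigma> i = undefined)}),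
              sset_act = (\<lambda>m n \<theta> \<sigma>. (\<lambda>i. if i \<le> m then \<sigma> (\<theta> i) else undefined)) \<rparr>"

definition Sing_map :: "('a \<Rightarrow> 'b) \<Rightarrow> nat \<Rightarrow> (nat \<Rightarrow> 'a) \<Rightarrow> (nat \<Rightarrow> 'b)" where
  "Sing_map f = (\<lambda>n \<sigma>. (\<lambda>i. if i \<le> n then f (\<sigma> i) else undefined))"

text \<open>sd \<Delta>[n]: the nerve of the poset of nonempty subsets of {0..n}
  (m-simplices: chains c 0 \<subseteq> ... \<subseteq> c m, normalised to {} beyond m).\<close>
definition sd_std :: "nat \<Rightarrow> (nat \<Rightarrow> nat set) sset" where
  "sd_std n = \<lparr> sset_set = (\<lambda>m. {c. (\<forall>i\<le>m. c i \<noteq> {} \<and> c i \<subseteq> {0..n}) \<and>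
                                   (\<forall>i j. i \<le> j \<and> j \<le> m \<longrightarrow> c i \<subseteq> c j) \<and>
                                   (\<forall>i>m. c i = {})}),
                 sset_act = (\<lambda>l m \<phi> c. (\<lambda>i. if i \<le> l then c (\<phi> i) else {})) \<rparr>"

definition sd_op :: "(nat \<Rightarrow> nat) \<Rightarrow> nat \<Rightarrow> (nat \<Rightarrow> nat set) \<Rightarrow> (nat \<Rightarrow> nat set)" where
  "sd_op \<theta> l c = (\<lambda>i. if i \<le> l then \<theta> ` c i else {})"

definition Ex :: "'x sset \<Rightarrow> (nat \<Rightarrow> (nat \<Rightarrow> nat set) \<Rightarrow> 'x) sset" where
  "Ex X = \<lparr> sset_set = (\<lambda>n. {F. sset_map (sd_std n) X F \<and>
                               (\<forall>l c. c \<notin> sset_set (sd_std n) l \<longrightarrow> F l c = undefined)}),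
            sset_act = (\<lambda>m n \<theta> F. (\<lambda>l c. if c \<in> sset_set (sd_std m) l
                                          then F l (sd_op \<theta> l c) else undefined)) \<rparr>"

definition Ex_map :: "(nat \<Rightarrow> 'x \<Rightarrow> 'y) \<Rightarrow> nat \<Rightarrow> (nat \<Rightarrow> (nat \<Rightarrow> nat set) \<Rightarrow> 'x)
                        \<Rightarrow> (nat \<Rightarrow> (nat \<Rightarrow> nat set) \<Rightarrow> 'y)" where
  "Ex_map p = (\<lambda>n F. (\<lambda>l c. if c \<in> sset_set (sd_std n) l then p l (F l c) else undefined))"

definition simplex_push :: "nat \<Rightarrow> nat \<Rightarrow> (nat \<Rightarrow> nat) \<Rightarrow> (nat \<Rightarrow> real) \<Rightarrow> (nat \<Rightarrow> real)" where
  "simplex_push m n \<theta> t = (\<lambda>j. if j \<le> n then (\<Sum>i\<in>{i. i \<le> m \<and> \<theta> i = j}. t i) else 0)"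

definition real_carrier :: "'x sset \<Rightarrow> (nat \<times> 'x \<times> (nat \<Rightarrow> real)) set" where
  "real_carrier X = {(n, x, t). x \<in> sset_set X n \<and> t \<in> standard_simplex n}"

definition real_rel :: "'x sset \<Rightarrow> ((nat \<times> 'x \<times> (nat \<Rightarrow> real)) \<times> (nat \<times> 'x \<times> (nat \<Rightarrow> real))) set" where
  "real_rel X = {((m, sset_act X m n \<theta> x, t), (n, x, simplex_push m n \<theta> t)) | m n \<theta> x t.
                   simp_op m n \<theta> \<and> x \<in> sset_set X n \<and> t \<in> standard_simplex m}"

definition real_class :: "'x sset \<Rightarrow> nat \<times> 'x \<times> (nat \<Rightarrow> real) \<Rightarrow> (nat \<times> 'x \<times> (nat \<Rightarrow> real)) set" where
  "real_class X p = ((real_rel X \<union> (real_rel X)\<inverse>)\<^sup>*) `` {p}"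

definition real_points :: "'x sset \<Rightarrow> (nat \<times> 'x \<times> (nat \<Rightarrow> real)) set set" where
  "real_points X = real_class X ` real_carrier X"

text \<open>|X| with the quotient topology of the disjoint union of X_n \<times> |\<Delta>^n|.\<close>
definition realization :: "'x sset \<Rightarrow> (nat \<times> 'x \<times> (nat \<Rightarrow> real)) set topology" where
  "realization X = topology (\<lambda>U. U \<subseteq> real_points X \<and>
      (\<forall>n x. x \<in> sset_set X n \<longrightarrow>
          openin (subtopology (powertop_real UNIV) (standard_simplex n))
                 {t \<in> standard_simplex n. real_class X (n, x, t) \<in> U}))"

definition realization_map :: "'x sset \<Rightarrow> 'y sset \<Rightarrow> (nat \<Rightarrow> 'x \<Rightarrow> 'y)
   \<Rightarrow> (nat \<times> 'x \<times> (nat \<Rightarrow> real)) set \<Rightarrow> (nat \<times> 'y \<times> (nat \<Rightarrow> real)) set" where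
  "realization_map X Y f c =
     (case (SOME p. p \<in> c) of (n, x, t) \<Rightarrow> real_class Y (n, f n x, t))"

definition sphere_base :: "nat \<Rightarrow> real" where
  "sphere_base = (\<lambda>i. if i = 0 then 1 else 0)"

text \<open>Weak homotopy equivalence of spaces: bijection on path components and,
  for every base point and every n \<ge> 1, bijection on \<pi>_n (pointed homotopy
  classes of pointed maps from the n-sphere).\<close>
definition weak_homotopy_equivalence :: "'a topology \<Rightarrow> 'b topology \<Rightarrow> ('a \<Rightarrow> 'b) \<Rightarrow> bool" where
  "weak_homotopy_equivalence X Y f \<longleftrightarrow> continuous_map X Y f \<and>
    (\<forall>y\<in>topspace Y. \<exists>x\<in>topspace X. path_component_of Y (f x) y) \<and>
    (\<forall>x1\<in>topspace X. \<forall>x2\<in>topspace X.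
        path_component_of Y (f x1) (f x2) \<longrightarrow> path_component_of X x1 x2) \<and>
    (\<forall>n\<ge>1. \<forall>x\<in>topspace X.
       (\<forall>g'. continuous_map (nsphere n) Y g' \<and> g' sphere_base = f x \<longrightarrow>
          (\<exists>g. continuous_map (nsphere n) X g \<and> g sphere_base = x \<and>
               homotopic_with (\<lambda>h. h sphere_base = f x) (nsphere n) Y (f \<circ> g) g')) \<and>
       (\<forall>g1 g2. continuous_map (nsphere n) X g1 \<and> g1 sphere_base = x \<and>
                continuous_map (nsphere n) X g2 \<and> g2 sphere_base = x \<and>
                homotopic_with (\<lambda>h. h sphere_base = f x) (nsphere n) Y (f \<circ> g1) (f \<circ> g2) \<longrightarrow>
                homotopic_with (\<lambda>h. h sphere_base = x) (nsphere n) X g1 g2))"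

definition sset_weak_equivalence :: "'x sset \<Rightarrow> 'y sset \<Rightarrow> (nat \<Rightarrow> 'x \<Rightarrow> 'y) \<Rightarrow> bool" where
  "sset_weak_equivalence X Y f \<longleftrightarrow> sset_map X Y f \<and>
     weak_homotopy_equivalence (realization X) (realization Y) (realization_map X Y f)"

definition thomason_weak_equivalence :: "'a cpx \<Rightarrow> 'b cpx \<Rightarrow> ('a \<Rightarrow> 'b) \<Rightarrow> bool" where
  "thomason_weak_equivalence K L f \<longleftrightarrow> cpx_map K L f \<and>
     sset_weak_equivalence (Sing K) (Sing L) (Sing_map f)"

definition thomason_fibration :: "'a cpx \<Rightarrow> 'b cpx \<Rightarrow> ('a \<Rightarrow> 'b) \<Rightarrow> bool" where
  "thomason_fibration K L f \<longleftrightarrow> cpx_map K L f \<and>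
     kan_fibration (Ex (Ex (Sing K))) (Ex (Ex (Sing L))) (Ex_map (Ex_map (Sing_map f)))"

definition thomason_trivial_fibration :: "'a cpx \<Rightarrow> 'b cpx \<Rightarrow> ('a \<Rightarrow> 'b) \<Rightarrow> bool" where
  "thomason_trivial_fibration K L f \<longleftrightarrow>
     thomason_weak_equivalence K L f \<and> thomason_fibration K L f"

definition cpx_llp :: "'c cpx \<Rightarrow> 'd cpx \<Rightarrow> ('c \<Rightarrow> 'd) \<Rightarrow> 'a cpx \<Rightarrow> 'b cpx \<Rightarrow> ('a \<Rightarrow> 'b) \<Rightarrow> bool" where
  "cpx_llp A B i K L p \<longleftrightarrow>
     (\<forall>u v. cpx_map A K u \<and> cpx_map B L v \<and> (\<forall>a\<in>cverts A. p (u a) = v (i a)) \<longrightarrow>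
        (\<exists>h. cpx_map B K h \<and> (\<forall>a\<in>cverts A. h (i a) = u a) \<and>
             (\<forall>b\<in>cverts B. p (h b) = v b)))"

end

theory Submission
  imports Defs "HOL-Analysis.Abstract_Topological_Spaces"
begin

(* The empty complex imposes no condition, so we must lift a map v : Delta^n -> L through the
   trivial fibration p : K -> L.

   Lifting into one simplex: if a simplex s of L contains p x0 for a vertex x0 of K, then every
   sequence of vertices of s lifts to a simplex of K. Indeed, every labelling of the vertices of
   sd^2 Delta[N] by vertices of s is an N-simplex of Ex^2 Sing L. Take the labelling that is p x0
   on the subdivided horn Lambda^N_0, so that there it is the image of the constant simplex at x0;
   fill the horn in Ex^2 Sing K, and read the lift off a top simplex of sd^2 Delta[N] along which
   the labelling runs through the prescribed vertices.

   Surjectivity on vertices: by the above, the image of p on vertices is closed under adjacency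
   in L. Hence "vertex 0 lies in the image" is invariant under the simplicial operators of
   Sing L, so it is constant on path components of |Sing L|; since p is surjective on path
   components, every vertex of L lies in the image. In particular v 0 = p x0 for some x0, and v
   lifts by the first part applied to the simplex v {0..n}. *)

section \<open>Simplices of iterated Ex from vertex labellings\<close>

lemma mem_sd_std:
  "c \<in> sset_set (sd_std m) l \<longleftrightarrow>
     (\<forall>i\<le>l. c i \<noteq> {} \<and> c i \<subseteq> {0..m}) \<and> (\<forall>i j. i \<le> j \<and> j \<le> l \<longrightarrow> c i \<subseteq> c j) \<and>
     (\<forall>i>l. c i = {})"
  by (simp add: sd_std_def)

lemma sset_act_sd_std: "sset_act (sd_std m) k l \<psi> c = (\<lambda>i. if i \<le> k then c (\<psi> i) else {})"
  by (simp add: sd_std_def)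

lemma sset_act_sd_std_mem:
  assumes "simp_op k l \<psi>" "c \<in> sset_set (sd_std m) l"
  shows "sset_act (sd_std m) k l \<psi> c \<in> sset_set (sd_std m) k"
  using assms unfolding mem_sd_std sset_act_sd_std simp_op_def by auto

lemma sd_op_mem:
  assumes "simp_op m n \<theta>" "c \<in> sset_set (sd_std m) l"
  shows "sd_op \<theta> l c \<in> sset_set (sd_std n) l"
  using assms unfolding mem_sd_std simp_op_def sd_op_def
  by (auto simp: image_mono) (meson atLeastAtMost_iff le0 subset_iff)

lemma sd_std_vertex_subset:
  "c \<in> sset_set (sd_std m) l \<Longrightarrow> i \<le> l \<Longrightarrow> c i \<subseteq> {0..m}"
  unfolding mem_sd_std by blast

lemma mem_Sing:
  "\<sigma> \<in> sset_set (Sing L) n \<longleftrightarrow> cpx_map (cpx_simplex n) L \<sigma> \<and> (\<forall>i>n. \<sigma> i = undefined)"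
  by (simp add: Sing_def)

lemma mem_Ex:
  "F \<in> sset_set (Ex X) n \<longleftrightarrow>
     sset_map (sd_std n) X F \<and> (\<forall>l c. c \<notin> sset_set (sd_std n) l \<longrightarrow> F l c = undefined)"
  by (simp add: Ex_def)

lemma sset_act_Ex:
  "sset_act (Ex X) m n \<theta> F =
     (\<lambda>l c. if c \<in> sset_set (sd_std m) l then F l (sd_op \<theta> l c) else undefined)"
  by (simp add: Ex_def)

lemma mem_Sing_into_simplex:
  assumes L: "simplicial_complex L" and \<sigma>: "\<sigma> \<in> csimps L"
    and into: "\<And>i. i \<le> n \<Longrightarrow> \<tau> i \<in> \<sigma>" and undef: "\<And>i. n < i \<Longrightarrow> \<tau> i = undefined"
  shows "\<tau> \<in> sset_set (Sing L) n"
proof -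
  have faces: "t \<subseteq> \<sigma> \<Longrightarrow> t \<noteq> {} \<Longrightarrow> t \<in> csimps L" for t
    using L \<sigma> unfolding simplicial_complex_def by blast
  have "\<sigma> \<subseteq> cverts L"
    using L \<sigma> unfolding simplicial_complex_def by blast
  moreover have "\<tau> ` s \<in> csimps L" if "s \<noteq> {}" "s \<subseteq> {0..n}" for s
    using that into by (intro faces) auto
  ultimately show ?thesis
    using into undef by (auto simp: mem_Sing cpx_map_def cpx_simplex_def cverts_def csimps_def)
qed

lemma Sing_vertex:
  "\<tau> \<in> sset_set (Sing K) n \<Longrightarrow> i \<le> n \<Longrightarrow> \<tau> i \<in> cverts K"
  by (simp add: mem_Sing cpx_map_def cpx_simplex_def cverts_def)

lemma Sing_image_simplex:
  "\<tau> \<in> sset_set (Sing K) n \<Longrightarrow> \<tau> ` {0..n} \<in> csimps K"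
  by (simp add: mem_Sing cpx_map_def cpx_simplex_def csimps_def)

lemma sset_act_Sing_vertex0: "sset_act (Sing K) m n \<theta> \<tau> 0 = \<tau> (\<theta> 0)"
  by (simp add: Sing_def)

lemma cpx_map_cpx_simplex_mono:
  assumes "m \<le> n" "cpx_map (cpx_simplex n) K g"
  shows "cpx_map (cpx_simplex m) K g"
  unfolding cpx_map_def
proof (intro conjI ballI)
  fix v
  assume "v \<in> cverts (cpx_simplex m)"
  then have "v \<in> cverts (cpx_simplex n)"
    using assms(1) by (simp add: cpx_simplex_def cverts_def)
  then show "g v \<in> cverts K"
    using assms(2) unfolding cpx_map_def by blast
next
  fix s
  assume "s \<in> csimps (cpx_simplex m)"
  then have "s \<in> csimps (cpx_simplex n)"
    using assms(1) by (auto simp: cpx_simplex_def csimps_def)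
  then show "g ` s \<in> csimps K"
    using assms(2) unfolding cpx_map_def by blast
qed

(* A vertex of sd Delta[m] is a nonempty subset of {0..m}, and a vertex of sd^2 Delta[m] is a
   chain of such subsets, i.e. a set of sets. ex_label and ex2_label send a labelling of these
   vertices to the map taking each simplex of the subdivision to the sequence of labels of its
   vertices; when all labels lie in one simplex of L, this is an m-simplex of Ex Sing L, resp.
   Ex^2 Sing L. *)
definition ex_label :: "(nat set \<Rightarrow> 'b) \<Rightarrow> nat \<Rightarrow> nat \<Rightarrow> (nat \<Rightarrow> nat set) \<Rightarrow> nat \<Rightarrow> 'b" where
  "ex_label \<kappa> m = (\<lambda>l c. if c \<in> sset_set (sd_std m) l
                          then (\<lambda>i. if i \<le> l then \<kappa> (c i) else undefined) else undefined)"

definition ex2_label ::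
    "(nat set set \<Rightarrow> 'b) \<Rightarrow> nat \<Rightarrow> nat \<Rightarrow> (nat \<Rightarrow> nat set) \<Rightarrow> nat \<Rightarrow> (nat \<Rightarrow> nat set) \<Rightarrow> nat \<Rightarrow> 'b"
  where "ex2_label \<phi> m = (\<lambda>l c. if c \<in> sset_set (sd_std m) l
                                then ex_label (\<lambda>S. \<phi> (c ` S)) l else undefined)"

lemma ex_label_cong:
  assumes "\<And>S. S \<subseteq> {0..m} \<Longrightarrow> \<kappa>1 S = \<kappa>2 S"
  shows "ex_label \<kappa>1 m = ex_label \<kappa>2 m"
  unfolding ex_label_def using assms sd_std_vertex_subset by (intro ext) auto

lemma ex2_label_cong:
  assumes "\<And>D. (\<forall>S\<in>D. S \<subseteq> {0..m}) \<Longrightarrow> \<phi>1 D = \<phi>2 D"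
  shows "ex2_label \<phi>1 m = ex2_label \<phi>2 m"
proof (intro ext[of "ex2_label \<phi>1 m"] ext[of "ex2_label \<phi>1 m _"])
  fix l c
  have "ex_label (\<lambda>S. \<phi>1 (c ` S)) l = ex_label (\<lambda>S. \<phi>2 (c ` S)) l"
    if c: "c \<in> sset_set (sd_std m) l"
  proof (intro ex_label_cong assms ballI)
    show "T \<subseteq> {0..m}" if "S \<subseteq> {0..l}" "T \<in> c ` S" for S T
      using that sd_std_vertex_subset[OF c] by force
  qed
  then show "ex2_label \<phi>1 m l c = ex2_label \<phi>2 m l c"
    by (simp add: ex2_label_def)
qed

lemma sset_act_Ex_ex_label:
  assumes "simp_op k l \<psi>"
  shows "sset_act (Ex X) k l \<psi> (ex_label \<kappa> l) = ex_label (\<lambda>S. \<kappa> (\<psi> ` S)) k"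
  using sd_op_mem[OF assms] by (intro ext) (auto simp: sset_act_Ex ex_label_def sd_op_def)

lemma sset_act_Ex_ex2_label:
  assumes "simp_op m n \<theta>"
  shows "sset_act (Ex X) m n \<theta> (ex2_label \<phi> n) = ex2_label (\<lambda>D. \<phi> ((`) \<theta> ` D)) m"
proof (intro ext[of "sset_act (Ex X) m n \<theta> (ex2_label \<phi> n)"]
    ext[of "sset_act (Ex X) m n \<theta> (ex2_label \<phi> n) _"])
  fix l c
  have "ex_label (\<lambda>S. \<phi> (sd_op \<theta> l c ` S)) l = ex_label (\<lambda>S. \<phi> ((`) \<theta> ` c ` S)) l"
  proof (rule ex_label_cong)
    fix S assume "S \<subseteq> {0..l}"
    then have "sd_op \<theta> l c ` S = (\<lambda>j. \<theta> ` c j) ` S"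
      by (intro image_cong) (auto simp: sd_op_def)
    then show "\<phi> (sd_op \<theta> l c ` S) = \<phi> ((`) \<theta> ` c ` S)"
      by (simp add: image_image)
  qed
  then show "sset_act (Ex X) m n \<theta> (ex2_label \<phi> n) l c = ex2_label (\<lambda>D. \<phi> ((`) \<theta> ` D)) m l c"
    using sd_op_mem[OF assms, of c l] by (simp add: sset_act_Ex ex2_label_def image_image)
qed

lemma Ex_map_Ex_map_Sing_map_ex2_label:
  "Ex_map (Ex_map (Sing_map p)) m (ex2_label \<phi> m) = ex2_label (p \<circ> \<phi>) m"
  by (intro ext) (simp add: Ex_map_def Sing_map_def ex2_label_def ex_label_def)

lemma ex_label_mem_Ex_Sing:
  assumes L: "simplicial_complex L" and \<sigma>: "\<sigma> \<in> csimps L" and \<kappa>: "\<And>S. \<kappa> S \<in> \<sigma>"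
  shows "ex_label \<kappa> m \<in> sset_set (Ex (Sing L)) m"
  unfolding mem_Ex sset_map_def
proof (intro conjI allI impI)
  show "ex_label \<kappa> m l c \<in> sset_set (Sing L) l" if "c \<in> sset_set (sd_std m) l" for l c
    by (rule mem_Sing_into_simplex[OF L \<sigma>]) (use that \<kappa> in \<open>simp_all add: ex_label_def\<close>)
next
  fix k l \<psi> c
  assume "simp_op k l \<psi> \<and> c \<in> sset_set (sd_std m) l"
  then show "ex_label \<kappa> m k (sset_act (sd_std m) k l \<psi> c) = sset_act (Sing L) k l \<psi> (ex_label \<kappa> m l c)"
    using sset_act_sd_std_mem[of k l \<psi> c m]
    by (auto simp: ex_label_def Sing_def sset_act_sd_std simp_op_def)
qed (simp add: ex_label_def)

lemma ex2_label_mem_Ex_Ex_Sing: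
  assumes L: "simplicial_complex L" and \<sigma>: "\<sigma> \<in> csimps L" and \<phi>: "\<And>D. \<phi> D \<in> \<sigma>"
  shows "ex2_label \<phi> m \<in> sset_set (Ex (Ex (Sing L))) m"
  unfolding mem_Ex[of "ex2_label \<phi> m"] sset_map_def
proof (intro conjI allI impI)
  show "ex2_label \<phi> m l c \<in> sset_set (Ex (Sing L)) l" if "c \<in> sset_set (sd_std m) l" for l c
    using that ex_label_mem_Ex_Sing[OF L \<sigma>] \<phi> by (simp add: ex2_label_def)
next
  fix k l \<psi> c
  assume \<psi>c: "simp_op k l \<psi> \<and> c \<in> sset_set (sd_std m) l"
  let ?c' = "sset_act (sd_std m) k l \<psi> c"
  have "ex2_label \<phi> m k ?c' = ex_label (\<lambda>S. \<phi> (?c' ` S)) k"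
    using \<psi>c sset_act_sd_std_mem by (simp add: ex2_label_def)
  also have "\<dots> = ex_label (\<lambda>S. \<phi> (c ` \<psi> ` S)) k"
  proof (rule ex_label_cong)
    fix S assume "S \<subseteq> {0..k}"
    then have "?c' ` S = c ` \<psi> ` S"
      by (auto simp: sset_act_sd_std image_iff subset_iff)
    then show "\<phi> (?c' ` S) = \<phi> (c ` \<psi> ` S)" by simp
  qed
  also have "\<dots> = sset_act (Ex (Sing L)) k l \<psi> (ex2_label \<phi> m l c)"
    using \<psi>c by (simp add: ex2_label_def sset_act_Ex_ex_label)
  finally show "ex2_label \<phi> m k ?c' = sset_act (Ex (Sing L)) k l \<psi> (ex2_label \<phi> m l c)" .
qed (simp add: ex2_label_def)

lemma sset_map_ex2_label:
  assumes L: "simplicial_complex L" and \<sigma>: "\<sigma> \<in> csimps L" and \<phi>: "\<And>D. \<phi> D \<in> \<sigma>"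
    and act: "\<And>m n \<psi> \<theta>. sset_act X m n \<psi> \<theta> = op_comp m \<theta> \<psi>"
  shows "sset_map X (Ex (Ex (Sing L))) (\<lambda>m \<theta>. ex2_label (\<lambda>D. \<phi> ((`) \<theta> ` D)) m)"
  unfolding sset_map_def
proof (intro conjI allI impI)
  fix m \<theta>
  show "ex2_label (\<lambda>D. \<phi> ((`) \<theta> ` D)) m \<in> sset_set (Ex (Ex (Sing L))) m"
    by (rule ex2_label_mem_Ex_Ex_Sing[OF L \<sigma> \<phi>])
next
  fix m n \<psi> \<theta>
  assume "simp_op m n \<psi> \<and> \<theta> \<in> sset_set X n"
  then have "sset_act (Ex (Ex (Sing L))) m n \<psi> (ex2_label (\<lambda>D. \<phi> ((`) \<theta> ` D)) n) =
      ex2_label (\<lambda>D. \<phi> ((`) \<theta> ` (`) \<psi> ` D)) m"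
    by (simp add: sset_act_Ex_ex2_label)
  also have "\<dots> = ex2_label (\<lambda>D. \<phi> ((`) (sset_act X m n \<psi> \<theta>) ` D)) m"
  proof (rule ex2_label_cong)
    fix D :: "nat set set"
    assume "\<forall>S\<in>D. S \<subseteq> {0..m}"
    then have "op_comp m \<theta> \<psi> ` S = \<theta> ` \<psi> ` S" if "S \<in> D" for S
    proof -
      have "S \<subseteq> {0..m}" using that \<open>\<forall>S\<in>D. S \<subseteq> {0..m}\<close> by blast
      then show ?thesis unfolding op_comp_def image_image by (intro image_cong) auto
    qed
    then have "(`) (sset_act X m n \<psi> \<theta>) ` D = (\<lambda>S. \<theta> ` \<psi> ` S) ` D"
      unfolding act by (rule image_cong[OF refl])
    then show "\<phi> ((`) \<theta> ` (`) \<psi> ` D) = \<phi> ((`) (sset_act X m n \<psi> \<theta>) ` D)"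
      by (simp only: image_image)
  qed
  finally show "ex2_label (\<lambda>D. \<phi> ((`) (sset_act X m n \<psi> \<theta>) ` D)) m =
      sset_act (Ex (Ex (Sing L))) m n \<psi> (ex2_label (\<lambda>D. \<phi> ((`) \<theta> ` D)) n)"
    by (rule sym)
qed

lemma ex2_label_apply:
  assumes "c \<in> sset_set (sd_std m) l" "c' \<in> sset_set (sd_std l) l'" "i \<le> l'"
  shows "ex2_label \<phi> m l c l' c' i = \<phi> (c ` c' i)"
  using assms by (simp add: ex2_label_def ex_label_def)

section \<open>Invariants of simplices are constant on path components of the realization\<close>

lemma istopology_realization:
  "istopology (\<lambda>U. U \<subseteq> real_points X \<and>
      (\<forall>n x. x \<in> sset_set X n \<longrightarrow>
          openin (subtopology (powertop_real UNIV) (standard_simplex n))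
                 {t \<in> standard_simplex n. real_class X (n, x, t) \<in> U}))"
proof -
  have Int: "{t \<in> A. f t \<in> S \<inter> T} = {t \<in> A. f t \<in> S} \<inter> {t \<in> A. f t \<in> T}"
    and Union: "{t \<in> A. f t \<in> \<Union>\<U>} = (\<Union>U\<in>\<U>. {t \<in> A. f t \<in> U})"
    for A :: "'c set" and f :: "'c \<Rightarrow> 'd" and S T \<U>
    by auto
  show ?thesis
    unfolding istopology_def Int Union
    by (intro conjI allI impI ballI openin_Int openin_Union; blast)
qed

lemma openin_realization:
  "openin (realization X) U \<longleftrightarrow> U \<subseteq> real_points X \<and>
      (\<forall>n x. x \<in> sset_set X n \<longrightarrow>
          openin (subtopology (powertop_real UNIV) (standard_simplex n))
                 {t \<in> standard_simplex n. real_class X (n, x, t) \<in> U})"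
  unfolding realization_def by (subst topology_inverse'[OF istopology_realization]) (rule refl)

lemma openin_standard_simplex_const:
  "openin (subtopology (powertop_real UNIV) (standard_simplex n)) {t \<in> standard_simplex n. P}"
proof (cases P)
  case True
  then show ?thesis
    using openin_topspace[of "subtopology (powertop_real UNIV) (standard_simplex n)"]
    by (simp add: topspace_standard_simplex)
qed simp

lemma topspace_realization: "topspace (realization X) = real_points X"
proof
  have "{t \<in> standard_simplex n. real_class X (n, x, t) \<in> real_points X} = standard_simplex n"
    if "x \<in> sset_set X n" for n x
    using that by (auto simp: real_points_def real_carrier_def)
  then have "openin (realization X) (real_points X)"
    unfolding openin_realization using openin_standard_simplex_const[of _ True] by simp
  then show "real_points X \<subseteq> topspace (realization X)"
    by (rule openin_subset)
  show "topspace (realization X) \<subseteq> real_points X"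
    using openin_topspace[of "realization X"] unfolding openin_realization by blast
qed

lemma real_class_self: "q \<in> real_class X q"
  unfolding real_class_def by blast

definition sset_invariant :: "'x sset \<Rightarrow> (nat \<Rightarrow> 'x \<Rightarrow> bool) \<Rightarrow> bool" where
  "sset_invariant X Q \<longleftrightarrow>
     (\<forall>m n \<theta> x. simp_op m n \<theta> \<and> x \<in> sset_set X n \<longrightarrow> (Q m (sset_act X m n \<theta> x) \<longleftrightarrow> Q n x))"

lemma real_class_sset_invariant:
  assumes Q: "sset_invariant X Q" and "(n, y, t) \<in> real_class X (m, x, s)"
  shows "Q n y \<longleftrightarrow> Q m x"
proof -
  let ?R = "real_rel X"
  have step: "Q (fst q) (fst (snd q)) \<longleftrightarrow> Q (fst q') (fst (snd q'))" if "(q, q') \<in> ?R" for q q'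
    using that Q unfolding real_rel_def sset_invariant_def by auto
  have "((m, x, s), (n, y, t)) \<in> (?R \<union> ?R\<inverse>)\<^sup>*"
    using assms(2) unfolding real_class_def by blast
  then have "Q m x \<longleftrightarrow> Q (fst (n, y, t)) (fst (snd (n, y, t)))"
    by (induction rule: rtrancl_induct) (auto dest: step)
  then show ?thesis by simp
qed

lemma real_class_mem_sset_invariant_image:
  assumes Q: "sset_invariant X Q" and q: "(n, x, t) \<in> real_carrier X"
  shows "real_class X (n, x, t) \<in> real_class X ` {(n, x, t) \<in> real_carrier X. Q n x} \<longleftrightarrow> Q n x"
proof
  assume "real_class X (n, x, t) \<in> real_class X ` {(n, x, t) \<in> real_carrier X. Q n x}"
  then obtain n' x' t' where "Q n' x'" "real_class X (n, x, t) = real_class X (n', x', t')"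
    by auto
  then have "(n, x, t) \<in> real_class X (n', x', t')"
    using real_class_self[of "(n, x, t)" X] by simp
  with \<open>Q n' x'\<close> show "Q n x"
    using real_class_sset_invariant[OF Q] by simp
qed (use q in blast)

lemma openin_realization_constant_on_simplices:
  assumes "U \<subseteq> real_points X"
    and const: "\<And>n x t t'. x \<in> sset_set X n \<Longrightarrow> t \<in> standard_simplex n \<Longrightarrow>
                  t' \<in> standard_simplex n \<Longrightarrow> real_class X (n, x, t) \<in> U \<Longrightarrow> real_class X (n, x, t') \<in> U"
  shows "openin (realization X) U"
  unfolding openin_realization
proof (intro conjI allI impI)
  fix n x
  assume x: "x \<in> sset_set X n"
  have eq: "{t \<in> standard_simplex n. real_class X (n, x, t) \<in> U} =
      {t \<in> standard_simplex n. \<exists>t'\<in>standard_simplex n. real_class X (n, x, t') \<in> U}"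
    using const[OF x] by blast
  show "openin (subtopology (powertop_real UNIV) (standard_simplex n))
      {t \<in> standard_simplex n. real_class X (n, x, t) \<in> U}"
    unfolding eq by (rule openin_standard_simplex_const)
qed (rule assms(1))

lemma path_component_of_clopen:
  assumes "path_component_of X a b" "openin X U" "openin X (topspace X - U)"
  shows "a \<in> U \<longleftrightarrow> b \<in> U"
proof -
  obtain g where g: "pathin X g" "g 0 = a" "g 1 = b"
    using assms(1) unfolding path_component_of_def by blast
  have "closedin X U"
    using assms(2,3) by (simp add: closedin_def openin_subset)
  then have "g ` {0..1} \<subseteq> U \<or> disjnt (g ` {0..1}) U"
    using connectedin_clopen_cases[OF connectedin_path_image[OF g(1)] _ assms(2)] by blast
  moreover have "a \<in> g ` {0..1}" "b \<in> g ` {0..1}"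
    using g(2,3) by force+
  ultimately show ?thesis
    by (auto simp: disjnt_def)
qed

lemma realization_path_component_sset_invariant:
  assumes Q: "sset_invariant X Q" and pc: "path_component_of (realization X) c d"
    and "(m, x, s) \<in> c" "(n, y, t) \<in> d"
  shows "Q m x \<longleftrightarrow> Q n y"
proof -
  define U where "U = real_class X ` {(n, x, t) \<in> real_carrier X. Q n x}"
  have U_iff: "real_class X (k, z, r) \<in> U \<longleftrightarrow> Q k z" if "(k, z, r) \<in> real_carrier X" for k z r
    unfolding U_def by (rule real_class_mem_sset_invariant_image[OF Q that])
  have "openin (realization X) U"
  proof (rule openin_realization_constant_on_simplices)
    show "U \<subseteq> real_points X"
      unfolding U_def real_points_def by blast
  qed (simp add: U_iff real_carrier_def)
  moreover have "openin (realization X) (topspace (realization X) - U)"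
    unfolding topspace_realization
    by (rule openin_realization_constant_on_simplices)
      (auto simp: real_points_def U_iff real_carrier_def)
  ultimately have U: "openin (realization X) U" "openin (realization X) (topspace (realization X) - U)" .
  have Q_iff: "Q k z \<longleftrightarrow> e \<in> U"
    if e: "e \<in> topspace (realization X)" and kzr: "(k, z, r) \<in> e" for e k z r
  proof -
    obtain q where "q \<in> real_carrier X" "e = real_class X q"
      using e unfolding topspace_realization real_points_def by blast
    moreover obtain k' z' r' where "q = (k', z', r')"
      by (cases q)
    ultimately have carrier: "(k', z', r') \<in> real_carrier X" and e_eq: "e = real_class X (k', z', r')"
      by simp_all
    have "Q k z \<longleftrightarrow> Q k' z'"
      using real_class_sset_invariant[OF Q] kzr e_eq by simp
    then show ?thesis
      using U_iff[OF carrier] e_eq by simp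
  qed
  have "c \<in> topspace (realization X)" "d \<in> topspace (realization X)"
    using path_component_in_topspace[OF pc] by auto
  then have "Q m x \<longleftrightarrow> c \<in> U" "Q n y \<longleftrightarrow> d \<in> U"
    using Q_iff assms(3,4) by blast+
  then show ?thesis
    using path_component_of_clopen[OF pc U] by simp
qed

lemma realization_map_representative:
  assumes "c \<in> topspace (realization X)"
  obtains n x t where "(n, x, t) \<in> c" "(n, f n x, t) \<in> realization_map X Y f c"
proof -
  obtain q0 where "c = real_class X q0"
    using assms unfolding topspace_realization real_points_def by blast
  then have "q0 \<in> c"
    using real_class_self by simp
  then have "(SOME q. q \<in> c) \<in> c"
    by (rule someI)
  moreover obtain n x t where nxt: "(SOME q. q \<in> c) = (n, x, t)"
    by (cases "SOME q. q \<in> c")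
  moreover have "realization_map X Y f c = real_class Y (n, f n x, t)"
    unfolding realization_map_def nxt by simp
  ultimately show ?thesis
    by (intro that[of n x t]) (simp_all add: real_class_self)
qed

section \<open>Lifting simplices along a trivial fibration\<close>

definition final_segment_chain :: "nat \<Rightarrow> nat \<Rightarrow> nat set" where
  "final_segment_chain N j = (if j \<le> N then {N - j..N} else {})"

lemma final_segment_chain_mem: "final_segment_chain N \<in> sset_set (sd_std N) N"
  unfolding mem_sd_std final_segment_chain_def by auto

lemma final_segment_chain_image:
  assumes "i \<le> N"
  shows "final_segment_chain N ` final_segment_chain N i = (\<lambda>k. {N - k..N}) ` {N - i..N}"
  by (rule image_cong) (use assms in \<open>simp_all add: final_segment_chain_def\<close>)

lemma Union_final_segment_chain:
  assumes "i \<le> N"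
  shows "\<Union> (final_segment_chain N ` final_segment_chain N i) = {0..N}"
  unfolding final_segment_chain_image[OF assms]
proof (rule antisym)
  show "(\<Union>k\<in>{N - i..N}. {N - k..N}) \<subseteq> {0..N}"
    by (rule UN_least) auto
  show "{0..N} \<subseteq> (\<Union>k\<in>{N - i..N}. {N - k..N})"
    using UN_upper[of N "{N - i..N}" "\<lambda>k. {N - k..N}"] by simp
qed

lemma Inter_final_segment_chain:
  assumes "i \<le> N"
  shows "\<Inter> (final_segment_chain N ` final_segment_chain N i) = {i..N}"
  unfolding final_segment_chain_image[OF assms]
proof (rule antisym)
  show "(\<Inter>k\<in>{N - i..N}. {N - k..N}) \<subseteq> {i..N}"
    using INT_lower[of "N - i" "{N - i..N}" "\<lambda>k. {N - k..N}"] assms by simp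
  show "{i..N} \<subseteq> (\<Inter>k\<in>{N - i..N}. {N - k..N})"
    by (rule INT_greatest) auto
qed

(* The chain D, a vertex of sd^2 Delta[N], lies in the subdivided horn Lambda^N_0 iff its union
   misses some vertex j > 0. *)
definition horn_label :: "nat \<Rightarrow> 'b \<Rightarrow> (nat \<Rightarrow> 'b) \<Rightarrow> nat set set \<Rightarrow> 'b" where
  "horn_label N y w D = (if \<exists>j\<le>N. j \<noteq> 0 \<and> j \<notin> \<Union>D then y else w (Min (\<Inter>D)))"

lemma horn_label_horn:
  assumes "\<theta> \<in> sset_set (horn_sset N 0) m" "\<forall>S\<in>D. S \<subseteq> {0..m}"
  shows "horn_label N y w ((`) \<theta> ` D) = y"
proof -
  obtain j where "j \<le> N" "j \<noteq> 0" "j \<notin> \<theta> ` {0..m}"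
    using assms(1) by (auto simp: horn_sset_def)
  then have "\<exists>j\<le>N. j \<noteq> 0 \<and> j \<notin> \<Union> ((`) \<theta> ` D)"
    using assms(2) by blast
  then show ?thesis
    unfolding horn_label_def by simp
qed

lemma horn_label_final_segment_chain:
  assumes "i \<le> N"
  shows "horn_label N y w (final_segment_chain N ` final_segment_chain N i) = w i"
proof -
  have "Min {i..N} = i"
    using assms by (intro Min_eqI) auto
  then show ?thesis
    unfolding horn_label_def Union_final_segment_chain[OF assms]
      Inter_final_segment_chain[OF assms] by auto
qed

lemma ex2_label_op_id: "ex2_label (\<lambda>D. \<phi> ((`) (op_id N) ` D)) N = ex2_label \<phi> N"
proof (rule ex2_label_cong)
  fix D :: "nat set set"
  assume "\<forall>S\<in>D. S \<subseteq> {0..N}"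
  then have "op_id N ` S = S" if "S \<in> D" for S
    using that unfolding op_id_def by (force simp: image_iff)
  then show "\<phi> ((`) (op_id N) ` D) = \<phi> D"
    by simp
qed

lemma Ex_Ex_Sing_diagonal:
  assumes F: "F \<in> sset_set (Ex (Ex (Sing K))) N"
    and pF: "Ex_map (Ex_map (Sing_map p)) N F = ex2_label \<phi> N"
    and c: "c \<in> sset_set (sd_std N) N"
  shows "cpx_map (cpx_simplex N) K (F N c N c)"
    and "i \<le> N \<Longrightarrow> p (F N c N c i) = \<phi> (c ` c i)"
proof -
  have "F N c \<in> sset_set (Ex (Sing K)) N"
    using F c unfolding mem_Ex sset_map_def by blast
  then have "F N c N c \<in> sset_set (Sing K) N"
    using c unfolding mem_Ex sset_map_def by blast
  then show "cpx_map (cpx_simplex N) K (F N c N c)"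
    unfolding mem_Sing by blast
  assume i: "i \<le> N"
  have "p (F N c N c i) = Ex_map (Ex_map (Sing_map p)) N F N c N c i"
    using c i by (simp add: Ex_map_def Sing_map_def)
  then show "p (F N c N c i) = \<phi> (c ` c i)"
    using ex2_label_apply[OF c c i] pF by simp
qed

context
  fixes K :: "'a cpx" and L :: "'b cpx" and p :: "'a \<Rightarrow> 'b"
  assumes K: "simplicial_complex K" and L: "simplicial_complex L"
    and fib: "kan_fibration (Ex (Ex (Sing K))) (Ex (Ex (Sing L))) (Ex_map (Ex_map (Sing_map p)))"
begin

lemma lift_into_simplex_via_horn:
  assumes x0: "x0 \<in> cverts K" and \<sigma>: "\<sigma> \<in> csimps L" "p x0 \<in> \<sigma>" and w: "\<And>i. w i \<in> \<sigma>"
    and N: "1 \<le> N"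
  shows "\<exists>g. cpx_map (cpx_simplex N) K g \<and> (\<forall>i\<le>N. p (g i) = w i)"
proof -
  define a where "a m \<theta> = ex2_label (\<lambda>_. x0) m" for m and \<theta> :: "nat \<Rightarrow> nat"
  define b where "b m \<theta> = ex2_label (\<lambda>D. horn_label N (p x0) w ((`) \<theta> ` D)) m" for m \<theta>
  have "{x0} \<in> csimps K"
    using K x0 unfolding simplicial_complex_def by blast
  then have a: "sset_map (horn_sset N 0) (Ex (Ex (Sing K))) a"
    unfolding a_def
    by (rule sset_map_ex2_label[OF K, where \<phi> = "\<lambda>_. x0", simplified])
      (simp_all add: horn_sset_def)
  have b: "sset_map (std_sset N) (Ex (Ex (Sing L))) b"
    unfolding b_def
    by (rule sset_map_ex2_label[OF L \<sigma>(1)]) (use \<sigma>(2) w in \<open>simp_all add: horn_label_def std_sset_def\<close>)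
  have horn: "Ex_map (Ex_map (Sing_map p)) m (a m \<theta>) = b m \<theta>"
    if "\<theta> \<in> sset_set (horn_sset N 0) m" for m \<theta>
    unfolding a_def b_def Ex_map_Ex_map_Sing_map_ex2_label
    by (rule ex2_label_cong) (simp add: horn_label_horn[OF that])
  obtain h where h: "sset_map (std_sset N) (Ex (Ex (Sing K))) h"
    and ph: "\<And>m \<theta>. \<theta> \<in> sset_set (std_sset N) m \<Longrightarrow> Ex_map (Ex_map (Sing_map p)) m (h m \<theta>) = b m \<theta>"
    using fib[unfolded kan_fibration_def, THEN conjunct2, rule_format, of N 0 a b] N a b horn
    by blast
  have top: "op_id N \<in> sset_set (std_sset N) N"
    by (simp add: std_sset_def simp_op_def op_id_def)
  then have "h N (op_id N) \<in> sset_set (Ex (Ex (Sing K))) N"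
    using h unfolding sset_map_def by blast
  moreover have "Ex_map (Ex_map (Sing_map p)) N (h N (op_id N)) = ex2_label (horn_label N (p x0) w) N"
    using ph[OF top] unfolding b_def ex2_label_op_id .
  ultimately show ?thesis
    using Ex_Ex_Sing_diagonal[OF _ _ final_segment_chain_mem] horn_label_final_segment_chain
    by metis
qed

lemma lift_into_simplex:
  assumes x0: "x0 \<in> cverts K" and \<sigma>: "\<sigma> \<in> csimps L" "p x0 \<in> \<sigma>" and w: "\<And>i. w i \<in> \<sigma>"
  shows "\<exists>g. cpx_map (cpx_simplex N) K g \<and> (\<forall>i\<le>N. p (g i) = w i)"
proof -
  have "\<exists>g. cpx_map (cpx_simplex (Suc N)) K g \<and> (\<forall>i\<le>Suc N. p (g i) = w i)"
    by (rule lift_into_simplex_via_horn[OF x0 \<sigma> w]) simp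
  then obtain g where "cpx_map (cpx_simplex (Suc N)) K g" "\<forall>i\<le>Suc N. p (g i) = w i"
    by blast
  moreover have "cpx_map (cpx_simplex N) K g"
    using cpx_map_cpx_simplex_mono[of N "Suc N"] calculation(1) by simp
  ultimately show ?thesis
    by auto
qed

lemma vertex_image_closed_under_adjacency:
  assumes \<tau>: "\<tau> \<in> csimps L" "y \<in> \<tau>" "z \<in> \<tau>" and y: "y \<in> p ` cverts K"
  shows "z \<in> p ` cverts K"
proof -
  obtain x0 where x0: "x0 \<in> cverts K" "p x0 = y"
    using y by blast
  have "\<exists>g. cpx_map (cpx_simplex 0) K g \<and> (\<forall>i\<le>0. p (g i) = z)"
    by (rule lift_into_simplex[OF x0(1) \<tau>(1)]) (use x0 \<tau> in auto)
  then obtain g where g: "cpx_map (cpx_simplex 0) K g" and "p (g 0) = z"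
    by blast
  have "0 \<in> cverts (cpx_simplex 0)"
    by (simp add: cpx_simplex_def cverts_def)
  then have "g 0 \<in> cverts K"
    using g unfolding cpx_map_def by blast
  with \<open>p (g 0) = z\<close> show ?thesis
    by blast
qed

lemma sset_invariant_Sing_vertex0_in_image:
  "sset_invariant (Sing L) (\<lambda>n \<tau>. \<tau> 0 \<in> p ` cverts K)"
  unfolding sset_invariant_def sset_act_Sing_vertex0
proof (intro allI impI)
  fix m k \<theta> \<tau>
  assume \<theta>\<tau>: "simp_op m k \<theta> \<and> \<tau> \<in> sset_set (Sing L) k"
  then have "\<tau> ` {0..k} \<in> csimps L"
    using Sing_image_simplex by blast
  moreover have "\<tau> (\<theta> 0) \<in> \<tau> ` {0..k}" "\<tau> 0 \<in> \<tau> ` {0..k}"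
    using \<theta>\<tau> unfolding simp_op_def by auto
  ultimately show "\<tau> (\<theta> 0) \<in> p ` cverts K \<longleftrightarrow> \<tau> 0 \<in> p ` cverts K"
    using vertex_image_closed_under_adjacency by blast
qed

lemma vertex_in_image_of_trivial_fibration:
  assumes we: "weak_homotopy_equivalence (realization (Sing K)) (realization (Sing L))
               (realization_map (Sing K) (Sing L) (Sing_map p))"
    and y: "y \<in> cverts L"
  shows "y \<in> p ` cverts K"
proof -
  define v :: "nat \<Rightarrow> 'b" where "v i = (if i = 0 then y else undefined)" for i
  define e :: "nat \<Rightarrow> real" where "e i = (if i = 0 then 1 else 0)" for i
  have "{y} \<in> csimps L"
    using L y unfolding simplicial_complex_def by blast
  then have "v \<in> sset_set (Sing L) 0"
    by (rule mem_Sing_into_simplex[OF L]) (simp_all add: v_def)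
  moreover have "e \<in> standard_simplex 0"
    by (simp add: standard_simplex_def e_def)
  ultimately have "real_class (Sing L) (0, v, e) \<in> topspace (realization (Sing L))"
    by (auto simp: topspace_realization real_points_def real_carrier_def)
  then obtain c where c: "c \<in> topspace (realization (Sing K))"
    and pc: "path_component_of (realization (Sing L))
               (realization_map (Sing K) (Sing L) (Sing_map p) c) (real_class (Sing L) (0, v, e))"
    using we[unfolded weak_homotopy_equivalence_def, THEN conjunct2, THEN conjunct1] by blast
  obtain n \<sigma> t where \<sigma>: "(n, \<sigma>, t) \<in> c"
    and p\<sigma>: "(n, Sing_map p n \<sigma>, t) \<in> realization_map (Sing K) (Sing L) (Sing_map p) c"
    using realization_map_representative[OF c] by blast
  (* realization_map evaluates on a SOME-chosen representative, which need not lie in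
     real_carrier; that its vertex 0 lies in K is transported from a representative that does. *)
  obtain q0 where "q0 \<in> real_carrier (Sing K)" "c = real_class (Sing K) q0"
    using c unfolding topspace_realization real_points_def by blast
  moreover obtain n0 \<sigma>0 t0 where "q0 = (n0, \<sigma>0, t0)"
    by (cases q0)
  ultimately have q0: "(n0, \<sigma>0, t0) \<in> real_carrier (Sing K)"
    and c_eq: "c = real_class (Sing K) (n0, \<sigma>0, t0)"
    by simp_all
  have "sset_act (Sing K) m k \<theta> \<tau> 0 \<in> cverts K \<and> \<tau> 0 \<in> cverts K"
    if "simp_op m k \<theta>" "\<tau> \<in> sset_set (Sing K) k" for m k \<theta> \<tau>
    using that Sing_vertex[of \<tau> K k] unfolding sset_act_Sing_vertex0 simp_op_def by simp
  then have "sset_invariant (Sing K) (\<lambda>n \<sigma>. \<sigma> 0 \<in> cverts K)"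
    unfolding sset_invariant_def by blast
  then have "\<sigma> 0 \<in> cverts K \<longleftrightarrow> \<sigma>0 0 \<in> cverts K"
    by (rule real_class_sset_invariant) (use \<sigma> c_eq in simp)
  moreover have "\<sigma>0 0 \<in> cverts K"
    using q0 Sing_vertex[of \<sigma>0 K n0 0] by (simp add: real_carrier_def)
  ultimately have "\<sigma> 0 \<in> cverts K"
    by blast
  moreover have "Sing_map p n \<sigma> 0 \<in> p ` cverts K \<longleftrightarrow> v 0 \<in> p ` cverts K"
    by (rule realization_path_component_sset_invariant
        [OF sset_invariant_Sing_vertex0_in_image pc p\<sigma> real_class_self])
  ultimately show ?thesis
    by (simp add: Sing_map_def v_def)
qed

lemma lift_cpx_simplex_map:
  assumes we: "weak_homotopy_equivalence (realization (Sing K)) (realization (Sing L))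
               (realization_map (Sing K) (Sing L) (Sing_map p))"
    and v: "cpx_map (cpx_simplex n) L v"
  shows "\<exists>h. cpx_map (cpx_simplex n) K h \<and> (\<forall>i\<in>cverts (cpx_simplex n). p (h i) = v i)"
proof -
  have "{0..n} \<in> csimps (cpx_simplex n)" "0 \<in> cverts (cpx_simplex n)"
    by (simp_all add: cpx_simplex_def csimps_def cverts_def)
  then have \<sigma>: "v ` {0..n} \<in> csimps L" and "v 0 \<in> cverts L"
    using v unfolding cpx_map_def by simp_all
  then have "v 0 \<in> p ` cverts K"
    by (intro vertex_in_image_of_trivial_fibration[OF we])
  then obtain x0 where x0: "x0 \<in> cverts K" "p x0 = v 0"
    by (metis imageE)
  have "\<exists>h. cpx_map (cpx_simplex n) K h \<and> (\<forall>i\<le>n. p (h i) = v (min i n))"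
    by (rule lift_into_simplex[OF x0(1) \<sigma>]) (use x0 in auto)
  then show ?thesis
    by (auto simp: cpx_simplex_def cverts_def)
qed

end

theorem lemma6p1:
  fixes n :: nat and K :: "'a cpx" and L :: "'b cpx" and p :: "'a \<Rightarrow> 'b"
  assumes "simplicial_complex K" and "simplicial_complex L"
    and "thomason_trivial_fibration K L p"
  shows "cpx_llp (empty_cpx :: nat cpx) (cpx_simplex n) (\<lambda>_. undefined) K L p"
proof -
  have fib: "kan_fibration (Ex (Ex (Sing K))) (Ex (Ex (Sing L))) (Ex_map (Ex_map (Sing_map p)))"
    and we: "weak_homotopy_equivalence (realization (Sing K)) (realization (Sing L))
               (realization_map (Sing K) (Sing L) (Sing_map p))"
    using assms(3) by (simp_all add: thomason_trivial_fibration_def thomason_fibration_def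
        thomason_weak_equivalence_def sset_weak_equivalence_def)
  have "cverts (empty_cpx :: nat cpx) = {}"
    by (simp add: empty_cpx_def cverts_def)
  then show ?thesis
    using lift_cpx_simplex_map[OF assms(1,2) fib we] unfolding cpx_llp_def by blast
qed

end
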